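(* Let $k, n \in \mathbb{N}$ with $k$ odd and $k \le 2n$. Color every edge of the complete bipartite graph $K_{2n,2n}$ red or blue so that every vertex is incident with exactly $n$ red edges and exactly $n$ blue edges. Then $K_{2n,2n}$ has a perfect matching consisting of exactly $k$ red edges and $2n-k$ blue edges if and only if the graph of blue edges is connected.
   Context: The graph of blue edges is the spanning subgraph of $K_{2n,2n}$ on all $4n$ vertices whose edge set is the set of blue edges. *)

theory Defs
  imports Main
begin

text \<open>K_{2n,2n}: left vertices i < 2n, right vertices j < 2n; edge (i,j) for every pair.
  A red/blue colouring is a predicate blue :: nat => nat => bool; edge (i,j) is red iff not blue i j.\<close>

definition balanced_colouring :: "nat \<Rightarrow> (nat \<Rightarrow> nat \<Rightarrow> bool) \<Rightarrow> bool" where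
  "balanced_colouring n blue \<longleftrightarrow>
     (\<forall>i<2*n. card {j. j < 2*n \<and> blue i j} = n \<and> card {j. j < 2*n \<and> \<not> blue i j} = n) \<and>
     (\<forall>j<2*n. card {i. i < 2*n \<and> blue i j} = n \<and> card {i. i < 2*n \<and> \<not> blue i j} = n)"

definition perfect_matching :: "nat \<Rightarrow> (nat \<times> nat) set \<Rightarrow> bool" where
  "perfect_matching n M \<longleftrightarrow>
     M \<subseteq> {..<2*n} \<times> {..<2*n} \<and>
     (\<forall>i<2*n. \<exists>!j. (i, j) \<in> M) \<and>
     (\<forall>j<2*n. \<exists>!i. (i, j) \<in> M)"

definition bip_verts :: "nat \<Rightarrow> (nat + nat) set" where
  "bip_verts n = Inl ` {..<2*n} \<union> Inr ` {..<2*n}"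

fun blue_adj :: "nat \<Rightarrow> (nat \<Rightarrow> nat \<Rightarrow> bool) \<Rightarrow> nat + nat \<Rightarrow> nat + nat \<Rightarrow> bool" where
  "blue_adj n blue (Inl i) (Inr j) = (i < 2*n \<and> j < 2*n \<and> blue i j)"
| "blue_adj n blue (Inr j) (Inl i) = (i < 2*n \<and> j < 2*n \<and> blue i j)"
| "blue_adj n blue _ _ = False"

definition blue_graph_connected :: "nat \<Rightarrow> (nat \<Rightarrow> nat \<Rightarrow> bool) \<Rightarrow> bool" where
  "blue_graph_connected n blue \<longleftrightarrow>
     (\<forall>u\<in>bip_verts n. \<forall>v\<in>bip_verts n. (blue_adj n blue)\<^sup>*\<^sup>* u v)"

end

theory Submission
  imports Defs "HOL-Combinatorics.Cycles" "HOL-Library.Transitive_Closure_Table"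
begin

text \<open>
  Perfect matchings of K_{2n,2n} are the permutations \<open>p\<close> of the rows. Call a colouring a
  block colouring if for some \<open>X\<close>, \<open>Y\<close> the edge \<open>(i, j)\<close> is blue exactly when
  \<open>i \<in> X \<longleftrightarrow> j \<in> Y\<close>. For a balanced colouring the blue graph is disconnected iff the
  colouring is a block colouring, and then \<open>|X| = |Y| = n\<close>; the red edges of a perfect matching
  run from \<open>X\<close> to the complement of \<open>Y\<close> or from the complement of \<open>X\<close> to \<open>Y\<close>, equally
  many of each kind, so their number is even.

  If the colouring is not a block colouring, any matching with fewer than \<open>2n\<close> edges of a
  colour \<open>c\<close> can be improved by one. Draw an arc \<open>a \<rightarrow> b\<close> when row \<open>a\<close> could take the partner
  \<open>p b\<close> instead of \<open>p a\<close> without changing the colour of its edge. A path \<open>v \<rightarrow> \<dots> \<rightarrow> u\<close>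
  such that \<open>(u, p u)\<close> is not of colour \<open>c\<close> but \<open>(u, p v)\<close> is, yields the improvement by
  rotating the partners along the path. If there is no such path, a terminal strong component
  of the digraph has exactly \<open>n\<close> rows and no arcs enter it, which forces a block colouring.
  Starting from the identity and raising the red or the blue count one step at a time reaches
  every red count \<open>k \<le> 2n\<close>.
\<close>

definition matching_of :: "nat \<Rightarrow> (nat \<Rightarrow> nat) \<Rightarrow> (nat \<times> nat) set" where
  "matching_of n p = (\<lambda>i. (i, p i)) ` {..<2*n}"

definition colour_count :: "nat \<Rightarrow> (nat \<Rightarrow> nat \<Rightarrow> bool) \<Rightarrow> (nat \<Rightarrow> nat) \<Rightarrow> nat" where
  "colour_count n c p = card {i. i < 2*n \<and> c i (p i)}"

definition block_colouring :: "nat \<Rightarrow> (nat \<Rightarrow> nat \<Rightarrow> bool) \<Rightarrow> bool" where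
  "block_colouring n c \<longleftrightarrow>
     (\<exists>X\<subseteq>{..<2*n}. \<exists>Y\<subseteq>{..<2*n}. \<forall>i<2*n. \<forall>j<2*n. c i j \<longleftrightarrow> (i \<in> X \<longleftrightarrow> j \<in> Y))"

lemma permutes_lessThan_iff: "p permutes {..<m::nat} \<Longrightarrow> p i < m \<longleftrightarrow> i < m"
  using permutes_in_image[of p "{..<m}" i] by simp

lemma card_permutes_filter:
  fixes m :: nat
  assumes p: "p permutes {..<m}"
  shows "card {i. i < m \<and> P (p i)} = card {j. j < m \<and> P j}"
proof -
  have "p ` {i. i < m \<and> P (p i)} = {j. j < m \<and> P j}"
    using p permutes_surj[OF p] by (fastforce simp: permutes_lessThan_iff)
  moreover have "inj_on p {i. i < m \<and> P (p i)}"
    using permutes_inj[OF p] by (rule inj_on_subset) simp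
  ultimately show ?thesis by (metis card_image)
qed

lemma perfect_matching_matching_of:
  assumes p: "p permutes {..<2*n}"
  shows "perfect_matching n (matching_of n p)"
  unfolding perfect_matching_def matching_of_def
proof (intro conjI allI impI)
  show "(\<lambda>i. (i, p i)) ` {..<2*n} \<subseteq> {..<2*n} \<times> {..<2*n}"
    using p by (auto simp: permutes_lessThan_iff)
  show "\<exists>!j. (i, j) \<in> (\<lambda>i. (i, p i)) ` {..<2*n}" if "i < 2*n" for i
    using that by auto
  show "\<exists>!i. (i, j) \<in> (\<lambda>i. (i, p i)) ` {..<2*n}" if "j < 2*n" for j
  proof
    have "inv p j < 2*n"
      using that permutes_lessThan_iff[OF permutes_inv[OF p]] by simp
    then show "(inv p j, j) \<in> (\<lambda>i. (i, p i)) ` {..<2*n}"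
      using permutes_inverses(1)[OF p] by force
    show "i = inv p j" if "(i, j) \<in> (\<lambda>i. (i, p i)) ` {..<2*n}" for i
      using that permutes_inverses(2)[OF p] by force
  qed
qed

lemma perfect_matching_obtain_permutes:
  assumes M: "perfect_matching n M"
  obtains p where "p permutes {..<2*n}" and "M = matching_of n p"
proof -
  have MV: "M \<subseteq> {..<2*n} \<times> {..<2*n}" and row: "\<And>i. i < 2*n \<Longrightarrow> \<exists>!j. (i, j) \<in> M"
    and col: "\<And>j. j < 2*n \<Longrightarrow> \<exists>!i. (i, j) \<in> M"
    using M unfolding perfect_matching_def by auto
  define p where "p i = (if i < 2*n then THE j. (i, j) \<in> M else i)" for i
  have pM: "(i, p i) \<in> M" if "i < 2*n" for i
    using theI'[OF row[OF that]] that by (simp add: p_def)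
  have p_unique: "j = p i" if "(i, j) \<in> M" for i j
    using that MV row pM by blast
  have M_eq: "M = matching_of n p"
    unfolding matching_of_def using MV pM p_unique by fastforce
  have "bij_betw p {..<2*n} {..<2*n}"
  proof (rule bij_betw_imageI)
    show "inj_on p {..<2*n}"
    proof (rule inj_onI)
      fix i i' assume i: "i \<in> {..<2*n}" and i': "i' \<in> {..<2*n}" and eq: "p i = p i'"
      have "(i, p i') \<in> M" using pM[of i] i eq by simp
      moreover have "(i', p i') \<in> M" using pM[of i'] i' by simp
      moreover have "p i' < 2*n" using pM[of i'] i' MV by auto
      ultimately show "i = i'" using col by blast
    qed
    show "p ` {..<2*n} = {..<2*n}"
    proof (intro subset_antisym subsetI)
      fix j assume "j \<in> {..<2*n}"
      then obtain i where "(i, j) \<in> M" using col by blast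
      then show "j \<in> p ` {..<2*n}" using MV p_unique by blast
    qed (use pM MV in auto)
  qed
  then have "p permutes {..<2*n}"
    by (rule bij_imp_permutes) (simp add: p_def)
  then show thesis using M_eq by (rule that)
qed

lemma card_matching_of_filter:
  "card {(i, j) \<in> matching_of n p. c i j} = colour_count n c p"
proof -
  have "{(i, j) \<in> matching_of n p. c i j} = (\<lambda>i. (i, p i)) ` {i. i < 2*n \<and> c i (p i)}"
    by (auto simp: matching_of_def)
  moreover have "inj_on (\<lambda>i. (i, p i)) A" for A
    by (auto intro: inj_onI)
  ultimately show ?thesis
    by (simp add: card_image colour_count_def)
qed

lemma colour_count_Not:
  "colour_count n (\<lambda>i j. \<not> c i j) p + colour_count n c p = 2*n"
proof -
  have "{i. i < 2*n \<and> \<not> c i (p i)} \<union> {i. i < 2*n \<and> c i (p i)} = {..<2*n}"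
    by auto
  moreover have "card ({i. i < 2*n \<and> \<not> c i (p i)} \<union> {i. i < 2*n \<and> c i (p i)})
      = card {i. i < 2*n \<and> \<not> c i (p i)} + card {i. i < 2*n \<and> c i (p i)}"
    by (rule card_Un_disjoint) auto
  ultimately show ?thesis
    unfolding colour_count_def by simp
qed

lemma ex_perfect_matching_colour_count_iff:
  "(\<exists>M. perfect_matching n M \<and> card {(i, j) \<in> M. \<not> c i j} = k \<and> card {(i, j) \<in> M. c i j} = 2*n - k)
   \<longleftrightarrow> (\<exists>p. p permutes {..<2*n} \<and> colour_count n (\<lambda>i j. \<not> c i j) p = k)"
proof
  assume "\<exists>M. perfect_matching n M \<and> card {(i, j) \<in> M. \<not> c i j} = k \<and>
    card {(i, j) \<in> M. c i j} = 2*n - k"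
  then obtain M where M: "perfect_matching n M" and red: "card {(i, j) \<in> M. \<not> c i j} = k"
    by blast
  obtain p where p: "p permutes {..<2*n}" and "M = matching_of n p"
    using M by (rule perfect_matching_obtain_permutes)
  then have "colour_count n (\<lambda>i j. \<not> c i j) p = k"
    using red card_matching_of_filter[of n p "\<lambda>i j. \<not> c i j"] by simp
  with p show "\<exists>p. p permutes {..<2*n} \<and> colour_count n (\<lambda>i j. \<not> c i j) p = k"
    by blast
next
  assume "\<exists>p. p permutes {..<2*n} \<and> colour_count n (\<lambda>i j. \<not> c i j) p = k"
  then obtain p where p: "p permutes {..<2*n}" and red: "colour_count n (\<lambda>i j. \<not> c i j) p = k"
    by blast
  have "card {(i, j) \<in> matching_of n p. \<not> c i j} = k"
    using red card_matching_of_filter[of n p "\<lambda>i j. \<not> c i j"] by simp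
  moreover have "card {(i, j) \<in> matching_of n p. c i j} = 2*n - k"
    using red colour_count_Not[of n c p] card_matching_of_filter[of n p c] by simp
  ultimately show "\<exists>M. perfect_matching n M \<and> card {(i, j) \<in> M. \<not> c i j} = k \<and>
    card {(i, j) \<in> M. c i j} = 2*n - k"
    using perfect_matching_matching_of[OF p] by blast
qed

lemma balanced_colouring_Not:
  "balanced_colouring n c \<Longrightarrow> balanced_colouring n (\<lambda>i j. \<not> c i j)"
  unfolding balanced_colouring_def by simp

lemma block_colouringI:
  assumes "X \<subseteq> {..<2*n}" and "Y \<subseteq> {..<2*n}"
    and "\<And>i j. i < 2*n \<Longrightarrow> j < 2*n \<Longrightarrow> c i j \<longleftrightarrow> (i \<in> X \<longleftrightarrow> j \<in> Y)"
  shows "block_colouring n c"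
  unfolding block_colouring_def
  by (rule exI[of _ X], rule conjI[OF assms(1)], rule exI[of _ Y], rule conjI[OF assms(2)])
    (simp add: assms(3))

lemma block_colouringE:
  assumes "block_colouring n c"
  obtains X Y where "X \<subseteq> {..<2*n}" and "Y \<subseteq> {..<2*n}"
    and "\<forall>i<2*n. \<forall>j<2*n. c i j \<longleftrightarrow> (i \<in> X \<longleftrightarrow> j \<in> Y)"
  using assms unfolding block_colouring_def by blast

lemma block_colouring_Not_iff:
  "block_colouring n (\<lambda>i j. \<not> c i j) \<longleftrightarrow> block_colouring n c"
proof -
  have "block_colouring n (\<lambda>i j. \<not> d i j)" if block: "block_colouring n d" for d
  proof -
    obtain X Y where X: "X \<subseteq> {..<2*n}" and "Y \<subseteq> {..<2*n}"
      and XY: "\<forall>i<2*n. \<forall>j<2*n. d i j \<longleftrightarrow> (i \<in> X \<longleftrightarrow> j \<in> Y)"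
      using block by (rule block_colouringE)
    show ?thesis
      by (rule block_colouringI[OF X Diff_subset]) (simp add: XY)
  qed
  from this[of c] this[of "\<lambda>i j. \<not> c i j"] show ?thesis
    by auto
qed

lemma even_card_crossing:
  fixes m :: nat
  assumes p: "p permutes {..<m}" and X: "X \<subseteq> {..<m}" and Y: "Y \<subseteq> {..<m}"
    and card: "card X = card Y"
  shows "even (card {i. i < m \<and> (i \<in> X \<longleftrightarrow> p i \<notin> Y)})"
proof -
  define P where "P = {i. i < m \<and> p i \<in> Y}"
  have fin: "finite X" "finite P"
    using finite_subset[OF X finite_lessThan] by (auto simp: P_def)
  have "card P = card {j. j < m \<and> j \<in> Y}"
    unfolding P_def by (rule card_permutes_filter[OF p])
  also have "{j. j < m \<and> j \<in> Y} = Y"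
    using Y by auto
  finally have "card P = card X"
    using card by simp
  then have "card (X - P) = card (P - X)"
    using fin by (simp add: card_Diff_subset_Int Int_commute)
  moreover have "{i. i < m \<and> (i \<in> X \<longleftrightarrow> p i \<notin> Y)} = (X - P) \<union> (P - X)"
    using X by (auto simp: P_def)
  moreover have "card ((X - P) \<union> (P - X)) = card (X - P) + card (P - X)"
    using fin by (intro card_Un_disjoint) auto
  ultimately show ?thesis
    by simp
qed

lemma block_colouring_card:
  assumes bal: "balanced_colouring n c" and n: "0 < n"
    and X: "X \<subseteq> {..<2*n}" and Y: "Y \<subseteq> {..<2*n}"
    and XY: "\<forall>i<2*n. \<forall>j<2*n. c i j \<longleftrightarrow> (i \<in> X \<longleftrightarrow> j \<in> Y)"
  shows "card X = n" and "card Y = n"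
proof -
  have half: "card A = n" if A: "A \<subseteq> {..<2*n}" and "card A = n \<or> card ({..<2*n} - A) = n" for A
    using that card_Diff_subset[OF finite_subset[OF A] A] card_mono[OF _ A] by auto
  have "card {j. j < 2*n \<and> c 0 j} = n" "card {i. i < 2*n \<and> c i 0} = n"
    using bal n unfolding balanced_colouring_def by auto
  moreover have "{j. j < 2*n \<and> c 0 j} = (if 0 \<in> X then Y else {..<2*n} - Y)"
    using XY Y n by auto
  moreover have "{i. i < 2*n \<and> c i 0} = (if 0 \<in> Y then X else {..<2*n} - X)"
    using XY X n by auto
  ultimately show "card X = n" "card Y = n"
    using half[OF X] half[OF Y] by (auto split: if_splits)
qed

lemma block_colouring_even_colour_count:
  assumes bal: "balanced_colouring n c" and block: "block_colouring n c"
    and p: "p permutes {..<2*n}"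
  shows "even (colour_count n c p)"
proof (cases "n = 0")
  case True
  then show ?thesis by (simp add: colour_count_def)
next
  case False
  obtain X Y where X: "X \<subseteq> {..<2*n}" and Y: "Y \<subseteq> {..<2*n}"
    and XY: "\<forall>i<2*n. \<forall>j<2*n. c i j \<longleftrightarrow> (i \<in> X \<longleftrightarrow> j \<in> Y)"
    using block by (rule block_colouringE)
  have "card X = card ({..<2*n} - Y)"
    using block_colouring_card[OF bal _ X Y XY] False card_Diff_subset[OF finite_subset[OF Y] Y]
    by simp
  then have "even (card {i. i < 2*n \<and> (i \<in> X \<longleftrightarrow> p i \<notin> {..<2*n} - Y)})"
    by (intro even_card_crossing[OF p X]) auto
  moreover have "{i. i < 2*n \<and> (i \<in> X \<longleftrightarrow> p i \<notin> {..<2*n} - Y)} = {i. i < 2*n \<and> c i (p i)}"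
    using XY by (auto simp: permutes_lessThan_iff[OF p])
  ultimately show ?thesis
    by (simp add: colour_count_def)
qed

lemma block_colouring_imp_not_connected:
  assumes bal: "balanced_colouring n c" and n: "0 < n" and block: "block_colouring n c"
  shows "\<not> blue_graph_connected n c"
proof
  assume conn: "blue_graph_connected n c"
  obtain X Y where "X \<subseteq> {..<2*n}" and "Y \<subseteq> {..<2*n}"
    and XY: "\<forall>i<2*n. \<forall>j<2*n. c i j \<longleftrightarrow> (i \<in> X \<longleftrightarrow> j \<in> Y)"
    using block by (rule block_colouringE)
  define A where "A = Inl ` X \<union> Inr ` Y"
  have adj: "a \<in> A \<longleftrightarrow> b \<in> A" if "blue_adj n c a b" for a b
    using that XY by (cases a; cases b) (auto simp: A_def)
  have reach: "a \<in> A \<longleftrightarrow> b \<in> A" if "(blue_adj n c)\<^sup>*\<^sup>* a b" for a b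
    using that by (induction rule: rtranclp_induct) (auto simp: adj)
  have "card {j. j < 2*n \<and> \<not> c 0 j} = n"
    using bal n unfolding balanced_colouring_def by auto
  then obtain j where j: "j < 2*n" "\<not> c 0 j"
    using n by (metis (no_types, lifting) card.empty empty_Collect_eq less_not_refl)
  have "(blue_adj n c)\<^sup>*\<^sup>* (Inl 0) (Inr j)"
    using conn n j unfolding blue_graph_connected_def bip_verts_def by auto
  moreover have "Inl 0 \<in> A \<longleftrightarrow> Inr j \<notin> A"
    using XY n j by (auto simp: A_def)
  ultimately show False
    using reach by blast
qed

lemma closed_pair_card_ge:
  assumes bal: "balanced_colouring n c"
    and X: "X \<subseteq> {..<2*n}" and Y: "Y \<subseteq> {..<2*n}"
    and closed: "\<forall>i<2*n. \<forall>j<2*n. c i j \<longrightarrow> (i \<in> X \<longleftrightarrow> j \<in> Y)"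
    and ne: "X \<noteq> {} \<or> Y \<noteq> {}"
  shows "n \<le> card X \<and> n \<le> card Y"
proof -
  have Y_ge: "n \<le> card Y" if "i \<in> X" for i
  proof -
    have "{j. j < 2*n \<and> c i j} \<subseteq> Y"
      using closed that X by auto
    moreover have "card {j. j < 2*n \<and> c i j} = n"
      using bal that X unfolding balanced_colouring_def by auto
    ultimately show ?thesis
      using card_mono[OF finite_subset[OF Y finite_lessThan]] by metis
  qed
  have X_ge: "n \<le> card X" if "j \<in> Y" for j
  proof -
    have "{i. i < 2*n \<and> c i j} \<subseteq> X"
      using closed that Y by auto
    moreover have "card {i. i < 2*n \<and> c i j} = n"
      using bal that Y unfolding balanced_colouring_def by auto
    ultimately show ?thesis
      using card_mono[OF finite_subset[OF X finite_lessThan]] by metis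
  qed
  show ?thesis
  proof (cases "n = 0")
    case False
    then have "X \<noteq> {}" "Y \<noteq> {}"
      using ne X_ge Y_ge by fastforce+
    then show ?thesis
      using X_ge Y_ge by blast
  qed simp
qed

lemma closed_pair_imp_block:
  assumes bal: "balanced_colouring n c"
    and X: "X \<subseteq> {..<2*n}" and Y: "Y \<subseteq> {..<2*n}"
    and closed: "\<forall>i<2*n. \<forall>j<2*n. c i j \<longrightarrow> (i \<in> X \<longleftrightarrow> j \<in> Y)"
    and ne: "X \<noteq> {} \<or> Y \<noteq> {}" and ne': "{..<2*n} - X \<noteq> {} \<or> {..<2*n} - Y \<noteq> {}"
  shows "\<forall>i<2*n. \<forall>j<2*n. c i j \<longleftrightarrow> (i \<in> X \<longleftrightarrow> j \<in> Y)"
proof (intro allI impI)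
  fix i j assume i: "i < 2*n" and j: "j < 2*n"
  have "n \<le> card Y" "n \<le> card ({..<2*n} - Y)"
    using closed_pair_card_ge[OF bal X Y closed ne]
      closed_pair_card_ge[OF bal Diff_subset Diff_subset _ ne'] closed by auto
  then have card_Y: "card Y = n" and card_co_Y: "card ({..<2*n} - Y) = n"
    using card_Diff_subset[OF finite_subset[OF Y] Y] card_mono[OF _ Y] by auto
  define R where "R = (if i \<in> X then Y else {..<2*n} - Y)"
  have sub: "{j. j < 2*n \<and> c i j} \<subseteq> R"
    using closed i by (auto simp: R_def)
  have "finite R"
    using finite_subset[OF Y finite_lessThan] by (simp add: R_def)
  moreover have "card {j. j < 2*n \<and> c i j} = card R"
    using bal i card_Y card_co_Y unfolding balanced_colouring_def R_def by simp
  ultimately have "{j. j < 2*n \<and> c i j} = R"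
    using sub by (metis card_subset_eq)
  then have "c i j \<longleftrightarrow> j \<in> R"
    using j by blast
  then show "c i j \<longleftrightarrow> (i \<in> X \<longleftrightarrow> j \<in> Y)"
    using j by (simp add: R_def)
qed

lemma not_connected_imp_block_colouring:
  assumes bal: "balanced_colouring n c" and nc: "\<not> blue_graph_connected n c"
  shows "block_colouring n c"
proof -
  obtain u v where u: "u \<in> bip_verts n" and v: "v \<in> bip_verts n"
    and nr: "\<not> (blue_adj n c)\<^sup>*\<^sup>* u v"
    using nc unfolding blue_graph_connected_def by blast
  define X where "X = {i. i < 2*n \<and> (blue_adj n c)\<^sup>*\<^sup>* u (Inl i)}"
  define Y where "Y = {j. j < 2*n \<and> (blue_adj n c)\<^sup>*\<^sup>* u (Inr j)}"
  have "(blue_adj n c)\<^sup>*\<^sup>* u (Inl i) \<longleftrightarrow> (blue_adj n c)\<^sup>*\<^sup>* u (Inr j)"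
    if "i < 2*n" "j < 2*n" "c i j" for i j
  proof -
    have "blue_adj n c (Inl i) (Inr j)" "blue_adj n c (Inr j) (Inl i)"
      using that by simp_all
    then show ?thesis
      by (meson rtranclp.rtrancl_into_rtrancl)
  qed
  then have closed: "\<forall>i<2*n. \<forall>j<2*n. c i j \<longrightarrow> (i \<in> X \<longleftrightarrow> j \<in> Y)"
    by (auto simp: X_def Y_def)
  have X: "X \<subseteq> {..<2*n}" and Y: "Y \<subseteq> {..<2*n}"
    by (auto simp: X_def Y_def)
  have "X \<noteq> {} \<or> Y \<noteq> {}"
    using u by (auto simp: bip_verts_def X_def Y_def)
  moreover have "{..<2*n} - X \<noteq> {} \<or> {..<2*n} - Y \<noteq> {}"
    using v nr by (auto simp: bip_verts_def X_def Y_def)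
  ultimately have XY: "\<forall>i<2*n. \<forall>j<2*n. c i j \<longleftrightarrow> (i \<in> X \<longleftrightarrow> j \<in> Y)"
    by (rule closed_pair_imp_block[OF bal X Y closed])
  show ?thesis
    by (rule block_colouringI[OF X Y]) (simp add: XY)
qed

lemma blue_graph_connected_iff_not_block:
  assumes "balanced_colouring n c" and "0 < n"
  shows "blue_graph_connected n c \<longleftrightarrow> \<not> block_colouring n c"
  using assms block_colouring_imp_not_connected not_connected_imp_block_colouring by blast

lemma finite_relation_obtain_terminal_component:
  assumes fin: "finite V" and ne: "V \<noteq> {}" and V_closed: "\<And>a b. a \<in> V \<Longrightarrow> r a b \<Longrightarrow> b \<in> V"
  obtains C where "C \<subseteq> V" and "C \<noteq> {}" and "\<forall>a\<in>C. \<forall>b. r a b \<longrightarrow> b \<in> C"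
    and "\<forall>a\<in>C. \<forall>b\<in>C. r\<^sup>*\<^sup>* a b"
proof -
  define closed where "closed C \<longleftrightarrow> C \<subseteq> V \<and> C \<noteq> {} \<and> (\<forall>a\<in>C. \<forall>b. r a b \<longrightarrow> b \<in> C)" for C
  have "closed V"
    using ne V_closed by (auto simp: closed_def)
  then obtain C where C: "closed C" and min: "\<And>D. closed D \<Longrightarrow> card C \<le> card D"
    using ex_has_least_nat[of closed V card] by auto
  have "r\<^sup>*\<^sup>* a b" if a: "a \<in> C" and b: "b \<in> C" for a b
  proof -
    have reach_C: "{b. r\<^sup>*\<^sup>* a b} \<subseteq> C"
    proof
      fix b assume "b \<in> {b. r\<^sup>*\<^sup>* a b}"
      then have "r\<^sup>*\<^sup>* a b" by simp
      then show "b \<in> C"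
        by (induction rule: rtranclp_induct) (use a C in \<open>auto simp: closed_def\<close>)
    qed
    moreover have "closed {b. r\<^sup>*\<^sup>* a b}"
      using reach_C C by (auto simp: closed_def intro: rtranclp.rtrancl_into_rtrancl)
    then have "card C \<le> card {b. r\<^sup>*\<^sup>* a b}"
      by (rule min)
    ultimately have "{b. r\<^sup>*\<^sup>* a b} = C"
      using finite_subset[OF _ fin] C by (intro card_seteq) (auto simp: closed_def)
    then show ?thesis
      using b by blast
  qed
  moreover have "C \<subseteq> V" "C \<noteq> {}" "\<forall>a\<in>C. \<forall>b. r a b \<longrightarrow> b \<in> C"
    using C by (auto simp: closed_def)
  ultimately show thesis
    using that by blast
qed

lemma cycle_of_list_nth:
  assumes "distinct cs" and "i < length cs"
  shows "cycle_of_list cs (cs ! i) = cs ! (Suc i mod length cs)"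
proof -
  have "map (cycle_of_list cs) cs = rotate 1 cs"
    using cyclic_rotation[OF assms(1), of 1] by simp
  then have "cycle_of_list cs (cs ! i) = rotate 1 cs ! i"
    by (metis assms(2) nth_map)
  also have "\<dots> = cs ! (Suc i mod length cs)"
    using assms(2) by (simp add: nth_rotate1)
  finally show ?thesis .
qed

lemma balanced_colouring_rows_imp_columns:
  assumes bal: "balanced_colouring n c"
    and C: "C \<subseteq> {..<2*n}" and D: "D \<subseteq> {..<2*n}" and card: "card C = card D"
    and rows: "\<forall>a\<in>C. \<forall>j<2*n. c a j \<longrightarrow> j \<in> D"
    and w: "w < 2*n" "w \<notin> C" and j: "j \<in> D"
  shows "\<not> c w j"
proof
  assume cwj: "c w j"
  have fin: "finite C" "finite D"
    using finite_subset C D by auto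
  have row: "card {j\<in>D. c a j} = n" if "a \<in> C" for a
  proof -
    have "{j\<in>D. c a j} = {j. j < 2*n \<and> c a j}"
      using that rows D by auto
    then show ?thesis
      using bal that C unfolding balanced_colouring_def by auto
  qed
  have col_le: "card {a\<in>C. c a j'} \<le> n" if "j' \<in> D" for j'
  proof -
    have "card {a\<in>C. c a j'} \<le> card {a. a < 2*n \<and> c a j'}"
      using C by (intro card_mono) auto
    then show ?thesis
      using bal that D unfolding balanced_colouring_def by auto
  qed
  have col_less: "card {a\<in>C. c a j} < n"
  proof -
    have "card {a\<in>C. c a j} < card {a. a < 2*n \<and> c a j}"
      using C w cwj by (intro psubset_card_mono) auto
    then show ?thesis
      using bal j D unfolding balanced_colouring_def by auto
  qed
  have "card C * n = (\<Sum>a\<in>C. card {j\<in>D. c a j})"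
    using row by simp
  also have "\<dots> = (\<Sum>j\<in>D. card {a\<in>C. c a j})"
    using sum.swap_restrict[OF fin, of "\<lambda>_ _. 1::nat" "\<lambda>a j. c a j"] by simp
  also have "\<dots> < (\<Sum>j\<in>D. n)"
    using col_le col_less j by (intro sum_strict_mono_ex1[OF fin(2)]) auto
  finally show False
    using card by simp
qed

lemma rtrancl_path_set_subset:
  assumes "\<And>a b. r a b \<Longrightarrow> a \<in> V \<and> b \<in> V"
  shows "rtrancl_path r v xs u \<Longrightarrow> xs \<noteq> [] \<Longrightarrow> set (v # xs) \<subseteq> V"
proof (induction rule: rtrancl_path.induct)
  case (step x y ys z)
  then show ?case
    using assms[OF step.hyps(1)] by (cases ys) auto
qed simp

lemma rtrancl_path_last_nth: "rtrancl_path r v xs u \<Longrightarrow> (v # xs) ! length xs = u"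
  by (induction rule: rtrancl_path.induct) auto

definition exchange_arc :: "nat \<Rightarrow> (nat \<Rightarrow> nat \<Rightarrow> bool) \<Rightarrow> (nat \<Rightarrow> nat) \<Rightarrow> nat \<Rightarrow> nat \<Rightarrow> bool" where
  "exchange_arc n c p a b \<longleftrightarrow> a < 2*n \<and> b < 2*n \<and> (c a (p b) \<longleftrightarrow> c a (p a))"

lemma exchange_arc_lessThan: "exchange_arc n c p a b \<Longrightarrow> a < 2*n \<and> b < 2*n"
  by (simp add: exchange_arc_def)

context
  fixes n :: nat and c :: "nat \<Rightarrow> nat \<Rightarrow> bool" and p :: "nat \<Rightarrow> nat"
  assumes bal: "balanced_colouring n c" and p: "p permutes {..<2*n}"
begin

lemma colour_rotate_exchange_path:
  assumes path: "rtrancl_path (exchange_arc n c p) v xs u" and dist: "distinct (v # xs)"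
    and good: "c u (p v)"
  shows "c i ((p \<circ> cycle_of_list (v # xs)) i) \<longleftrightarrow> i = u \<or> c i (p i)"
proof (cases "i \<in> set (v # xs)")
  case False
  moreover have "u \<in> set (v # xs)"
    using rtrancl_path_last_nth[OF path] by (metis length_Cons lessI nth_mem)
  ultimately show ?thesis
    using id_outside_supp[OF False] by auto
next
  case True
  define cs where "cs = v # xs"
  have cs_last: "cs ! length xs = u"
    using rtrancl_path_last_nth[OF path] by (simp add: cs_def)
  obtain k where k: "k < length cs" "i = cs ! k"
    using True by (metis cs_def in_set_conv_nth)
  have rotate: "cycle_of_list cs i = cs ! (Suc k mod length cs)"
    using cycle_of_list_nth[OF dist[folded cs_def] k(1)] k(2) by simp
  show ?thesis
  proof (cases "k < length xs")
    case True
    have "cs ! k \<noteq> cs ! length xs"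
      using nth_eq_iff_index_eq[OF dist[folded cs_def], of k "length xs"] True by (simp add: cs_def)
    moreover have "exchange_arc n c p (cs ! k) (cs ! Suc k)"
      using rtrancl_path_nth[OF path True] by (simp add: cs_def)
    ultimately show ?thesis
      using rotate True k(2) cs_last by (simp add: exchange_arc_def cs_def)
  next
    case False
    then have "k = length xs"
      using k(1) by (simp add: cs_def)
    then show ?thesis
      using rotate k(2) cs_last good by (simp add: cs_def)
  qed
qed

lemma colour_count_rotate_exchange_path:
  assumes path: "rtrancl_path (exchange_arc n c p) v xs u" and dist: "distinct (v # xs)"
    and bad: "\<not> c u (p u)" and good: "c u (p v)"
  shows "p \<circ> cycle_of_list (v # xs) permutes {..<2*n}"
    and "colour_count n c (p \<circ> cycle_of_list (v # xs)) = Suc (colour_count n c p)"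
proof -
  have "xs \<noteq> []"
    using path bad good by (auto elim: rtrancl_path.cases)
  have path_V: "set (v # xs) \<subseteq> {..<2*n}"
    by (rule rtrancl_path_set_subset[OF _ path \<open>xs \<noteq> []\<close>]) (simp add: exchange_arc_def)
  then show "p \<circ> cycle_of_list (v # xs) permutes {..<2*n}"
    by (rule permutes_compose[OF permutes_subset[OF cycle_permutes] p])
  have "u \<in> set (v # xs)"
    using rtrancl_path_last_nth[OF path] by (metis length_Cons lessI nth_mem)
  then have "{i. i < 2*n \<and> c i ((p \<circ> cycle_of_list (v # xs)) i)} = insert u {i. i < 2*n \<and> c i (p i)}"
    using colour_rotate_exchange_path[OF path dist good] path_V by auto
  then show "colour_count n c (p \<circ> cycle_of_list (v # xs)) = Suc (colour_count n c p)"
    using bad by (simp add: colour_count_def)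
qed

lemma card_exchange_arcs:
  assumes a: "a < 2*n"
  shows "card {b. exchange_arc n c p a b} = n"
proof -
  have "{b. exchange_arc n c p a b} = {b. b < 2*n \<and> (c a (p b) \<longleftrightarrow> c a (p a))}"
    using a by (auto simp: exchange_arc_def)
  also have "card \<dots> = card {j. j < 2*n \<and> (c a j \<longleftrightarrow> c a (p a))}"
    by (rule card_permutes_filter[OF p])
  also have "\<dots> = n"
    using bal a unfolding balanced_colouring_def by (cases "c a (p a)") auto
  finally show ?thesis .
qed

lemma exchange_closed_card_ge:
  assumes C: "C \<subseteq> {..<2*n}" and closed: "\<forall>a\<in>C. \<forall>b. exchange_arc n c p a b \<longrightarrow> b \<in> C"
    and a: "a \<in> C"
  shows "n \<le> card C"
proof -
  have "a < 2*n"
    using a C by auto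
  have "{b. exchange_arc n c p a b} \<subseteq> C"
    using closed a by blast
  then have "card {b. exchange_arc n c p a b} \<le> card C"
    by (rule card_mono[OF finite_subset[OF C finite_lessThan]])
  then show ?thesis
    using card_exchange_arcs[OF \<open>a < 2*n\<close>] by simp
qed

lemma exchange_arcs_separated:
  assumes C: "C \<subseteq> {..<2*n}" and card_C: "card C = n"
    and closed: "\<forall>a\<in>C. \<forall>b. exchange_arc n c p a b \<longrightarrow> b \<in> C"
    and co_closed: "\<forall>w b. w \<notin> C \<longrightarrow> exchange_arc n c p w b \<longrightarrow> b \<notin> C"
    and a: "a < 2*n"
  shows "{b. exchange_arc n c p a b} = (if a \<in> C then C else {..<2*n} - C)"
proof (rule card_subset_eq)
  show "finite (if a \<in> C then C else {..<2*n} - C)"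
    using finite_subset[OF C finite_lessThan] by simp
  show "{b. exchange_arc n c p a b} \<subseteq> (if a \<in> C then C else {..<2*n} - C)"
  proof
    fix b assume "b \<in> {b. exchange_arc n c p a b}"
    then have ab: "exchange_arc n c p a b"
      by simp
    have "b < 2*n"
      using exchange_arc_lessThan[OF ab] by simp
    show "b \<in> (if a \<in> C then C else {..<2*n} - C)"
    proof (cases "a \<in> C")
      case True
      then show ?thesis
        using closed ab by simp
    next
      case False
      then show ?thesis
        using co_closed ab \<open>b < 2*n\<close> by simp
    qed
  qed
  have "card ({..<2*n} - C) = n"
    using card_Diff_subset[OF finite_subset[OF C finite_lessThan] C] card_C by simp
  then show "card {b. exchange_arc n c p a b} = card (if a \<in> C then C else {..<2*n} - C)"
    using card_exchange_arcs[OF a] card_C by simp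
qed

lemma exchange_separated_imp_block:
  assumes C: "C \<subseteq> {..<2*n}" and card_C: "card C = n"
    and closed: "\<forall>a\<in>C. \<forall>b. exchange_arc n c p a b \<longrightarrow> b \<in> C"
    and co_closed: "\<forall>w b. w \<notin> C \<longrightarrow> exchange_arc n c p w b \<longrightarrow> b \<notin> C"
  shows "block_colouring n c"
proof -
  define X where "X = {i. i < 2*n \<and> (i \<in> C \<longleftrightarrow> c i (p i))}"
  show ?thesis
  proof (rule block_colouringI)
    show "X \<subseteq> {..<2*n}" "p ` C \<subseteq> {..<2*n}"
      using C permutes_lessThan_iff[OF p] by (auto simp: X_def)
    fix i j assume i: "i < 2*n" and j: "j < 2*n"
    define b where "b = inv p j"
    have pb: "p b = j" and b: "b < 2*n"
      using permutes_inverses(1)[OF p] permutes_lessThan_iff[OF permutes_inv[OF p]] j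
      by (auto simp: b_def)
    have "j \<in> p ` C \<longleftrightarrow> b \<in> C"
      using inj_image_mem_iff[OF permutes_inj[OF p], of b C] pb by simp
    moreover have "exchange_arc n c p i b \<longleftrightarrow> b \<in> (if i \<in> C then C else {..<2*n} - C)"
      using exchange_arcs_separated[OF C card_C closed co_closed i] by blast
    moreover have "exchange_arc n c p i b \<longleftrightarrow> (c i j \<longleftrightarrow> c i (p i))"
      using i b pb by (simp add: exchange_arc_def)
    moreover have "i \<in> X \<longleftrightarrow> (i \<in> C \<longleftrightarrow> c i (p i))"
      using i by (simp add: X_def)
    ultimately show "c i j \<longleftrightarrow> (i \<in> X \<longleftrightarrow> j \<in> p ` C)"
      using b by auto
  qed
qed

lemma terminal_component_with_bad_row:
  assumes C: "C \<subseteq> {..<2*n}"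
    and closed: "\<forall>a\<in>C. \<forall>b. exchange_arc n c p a b \<longrightarrow> b \<in> C"
    and strong: "\<forall>a\<in>C. \<forall>b\<in>C. (exchange_arc n c p)\<^sup>*\<^sup>* a b"
    and u: "u \<in> C" and bad: "\<not> c u (p u)"
    and no_path: "\<forall>v. c u (p v) \<longrightarrow> \<not> (exchange_arc n c p)\<^sup>*\<^sup>* v u"
  shows "card C = n" and "\<forall>w b. w \<notin> C \<longrightarrow> exchange_arc n c p w b \<longrightarrow> b \<notin> C"
proof -
  have u_V: "u < 2*n"
    using u C by auto
  have fin_C: "finite C"
    using finite_subset[OF C finite_lessThan] .
  have "{v. v < 2*n \<and> c u (p v)} \<subseteq> {..<2*n} - C"
    using no_path strong u by blast
  moreover have "card {v. v < 2*n \<and> c u (p v)} = n"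
    using card_permutes_filter[OF p, of "c u"] bal u_V unfolding balanced_colouring_def by simp
  ultimately have "n \<le> card ({..<2*n} - C)"
    by (metis card_mono finite_Diff finite_lessThan)
  moreover have "card ({..<2*n} - C) = 2*n - card C"
    using card_Diff_subset[OF fin_C C] by simp
  moreover have "n \<le> card C"
    by (rule exchange_closed_card_ge[OF C closed u])
  moreover have "card C \<le> 2*n"
    using card_mono[OF finite_lessThan C] by simp
  ultimately show card_C: "card C = n"
    by linarith
  have arcs_u: "{b. exchange_arc n c p u b} = C"
    using card_subset_eq[OF fin_C] closed u card_exchange_arcs[OF u_V] card_C by blast
  show "\<forall>w b. w \<notin> C \<longrightarrow> exchange_arc n c p w b \<longrightarrow> b \<notin> C"
  proof (intro allI impI notI)
    fix w b assume w: "w \<notin> C" and wb: "exchange_arc n c p w b"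
    assume b: "b \<in> C"
    have "w < 2*n"
      using exchange_arc_lessThan[OF wb] by simp
    then have "c u (p w)"
      using w arcs_u bad u_V by (auto simp: exchange_arc_def)
    moreover have "(exchange_arc n c p)\<^sup>*\<^sup>* w u"
      using wb strong b u by (blast intro: converse_rtranclp_into_rtranclp)
    ultimately show False
      using no_path by blast
  qed
qed

lemma exchange_closed_good_rows:
  assumes C: "C \<subseteq> {..<2*n}"
    and closed: "\<forall>a\<in>C. \<forall>b. exchange_arc n c p a b \<longrightarrow> b \<in> C"
    and good: "\<forall>a\<in>C. c a (p a)"
  shows "\<forall>a\<in>C. \<forall>j<2*n. c a j \<longrightarrow> j \<in> p ` C"
proof (intro ballI allI impI)
  fix a j assume a: "a \<in> C" and j: "j < 2*n" and "c a j"
  have "inv p j < 2*n" and p_inv: "p (inv p j) = j"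
    using permutes_lessThan_iff[OF permutes_inv[OF p]] permutes_inverses(1)[OF p] j by auto
  then have "exchange_arc n c p a (inv p j)"
    using \<open>c a j\<close> a good C by (auto simp: exchange_arc_def)
  then have "inv p j \<in> C"
    using closed a by blast
  then show "j \<in> p ` C"
    using p_inv by (metis image_eqI)
qed

lemma terminal_component_without_bad_row:
  assumes C: "C \<subseteq> {..<2*n}" and a: "a \<in> C"
    and closed: "\<forall>a\<in>C. \<forall>b. exchange_arc n c p a b \<longrightarrow> b \<in> C"
    and good: "\<forall>a\<in>C. c a (p a)"
    and w: "w < 2*n" and bad: "\<not> c w (p w)"
  shows "card C = n" and "\<forall>w b. w \<notin> C \<longrightarrow> exchange_arc n c p w b \<longrightarrow> b \<notin> C"
proof -
  have fin_C: "finite C"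
    using finite_subset[OF C finite_lessThan] .
  have rows: "\<forall>a\<in>C. \<forall>j<2*n. c a j \<longrightarrow> j \<in> p ` C"
    by (rule exchange_closed_good_rows[OF C closed good])
  have card_pC: "card C = card (p ` C)"
    using card_image[OF inj_on_subset[OF permutes_inj[OF p] subset_UNIV]] by simp
  have pC: "p ` C \<subseteq> {..<2*n}"
    using C permutes_lessThan_iff[OF p] by auto
  have outside: "\<not> c w' (p b)" if "w' < 2*n" "w' \<notin> C" "b \<in> C" for w' b
    using balanced_colouring_rows_imp_columns[OF bal C pC card_pC rows that(1,2)] that(3) by blast
  have card_row: "card {b. b < 2*n \<and> \<not> c w' (p b)} = n" if "w' < 2*n" for w'
    using card_permutes_filter[OF p, of "\<lambda>j. \<not> c w' j"] bal that
    unfolding balanced_colouring_def by simp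
  have "C \<subseteq> {b. b < 2*n \<and> \<not> c w (p b)}"
    using outside[OF w] good bad C by blast
  then have "card C \<le> n"
    using card_mono[of "{b. b < 2*n \<and> \<not> c w (p b)}" C] card_row[OF w] by simp
  with exchange_closed_card_ge[OF C closed a] show card_C: "card C = n"
    by simp
  show "\<forall>w b. w \<notin> C \<longrightarrow> exchange_arc n c p w b \<longrightarrow> b \<notin> C"
  proof (intro allI impI notI)
    fix w' b assume w': "w' \<notin> C" and arc: "exchange_arc n c p w' b"
    assume b: "b \<in> C"
    have w'_V: "w' < 2*n"
      using exchange_arc_lessThan[OF arc] by simp
    have "C \<subseteq> {b. b < 2*n \<and> \<not> c w' (p b)}"
      using outside[OF w'_V w'] C by blast
    then have "C = {b. b < 2*n \<and> \<not> c w' (p b)}"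
      using card_row[OF w'_V] card_C by (intro card_subset_eq) auto
    moreover have "\<not> c w' (p w')"
      using outside[OF w'_V w' b] arc by (simp add: exchange_arc_def)
    ultimately show False
      using w' w'_V by blast
  qed
qed

lemma exists_augmenting_exchange_path:
  assumes lt: "colour_count n c p < 2*n" and nb: "\<not> block_colouring n c"
  shows "\<exists>u v. \<not> c u (p u) \<and> c u (p v) \<and> (exchange_arc n c p)\<^sup>*\<^sup>* v u"
proof (rule ccontr)
  assume "\<not> ?thesis"
  then have no_path: "\<And>u v. \<not> c u (p u) \<Longrightarrow> c u (p v) \<Longrightarrow> \<not> (exchange_arc n c p)\<^sup>*\<^sup>* v u"
    by blast
  have "\<not> (\<forall>i<2*n. c i (p i))"
  proof
    assume "\<forall>i<2*n. c i (p i)"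
    then have "{i. i < 2*n \<and> c i (p i)} = {..<2*n}"
      by auto
    then show False
      using lt by (simp add: colour_count_def)
  qed
  then obtain w where w: "w < 2*n" "\<not> c w (p w)"
    by blast
  obtain C where C: "C \<subseteq> {..<2*n}" "C \<noteq> {}"
    and closed: "\<forall>a\<in>C. \<forall>b. exchange_arc n c p a b \<longrightarrow> b \<in> C"
    and strong: "\<forall>a\<in>C. \<forall>b\<in>C. (exchange_arc n c p)\<^sup>*\<^sup>* a b"
    by (rule finite_relation_obtain_terminal_component[of "{..<2*n}" "exchange_arc n c p"])
      (use w in \<open>auto dest: exchange_arc_lessThan\<close>)
  have "card C = n \<and> (\<forall>w b. w \<notin> C \<longrightarrow> exchange_arc n c p w b \<longrightarrow> b \<notin> C)"
  proof (cases "\<forall>a\<in>C. c a (p a)")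
    case True
    obtain a where "a \<in> C"
      using C(2) by blast
    then show ?thesis
      using terminal_component_without_bad_row[OF C(1) _ closed True w] by blast
  next
    case False
    then obtain u where u: "u \<in> C" and bad: "\<not> c u (p u)"
      by blast
    then have "\<forall>v. c u (p v) \<longrightarrow> \<not> (exchange_arc n c p)\<^sup>*\<^sup>* v u"
      using no_path by blast
    then show ?thesis
      using terminal_component_with_bad_row[OF C(1) closed strong u bad] by blast
  qed
  then have "block_colouring n c"
    using exchange_separated_imp_block[OF C(1) _ closed] by blast
  with nb show False
    by contradiction
qed

lemma exists_colour_count_Suc:
  assumes "colour_count n c p < 2*n" and "\<not> block_colouring n c"
  shows "\<exists>q. q permutes {..<2*n} \<and> colour_count n c q = Suc (colour_count n c p)"
proof -
  obtain u v where bad: "\<not> c u (p u)" and good: "c u (p v)"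
    and "(exchange_arc n c p)\<^sup>*\<^sup>* v u"
    using exists_augmenting_exchange_path[OF assms] by blast
  then obtain xs where "rtrancl_path (exchange_arc n c p) v xs u"
    by (auto simp: rtranclp_eq_rtrancl_path)
  then obtain ys where path: "rtrancl_path (exchange_arc n c p) v ys u"
    and dist: "distinct (v # ys)"
    by (rule rtrancl_path_distinct)
  show ?thesis
    by (intro exI[of _ "p \<circ> cycle_of_list (v # ys)"] conjI
        colour_count_rotate_exchange_path[OF path dist bad good])
qed

end

lemma exists_permutes_colour_count_ge:
  assumes bal: "balanced_colouring n c" and nb: "\<not> block_colouring n c"
    and "colour_count n c id \<le> k" and k: "k \<le> 2*n"
  shows "\<exists>q. q permutes {..<2*n} \<and> colour_count n c q = k"
  using assms(3)
proof (induction k rule: dec_induct)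
  case base
  show ?case
    using permutes_id by blast
next
  case (step k')
  then obtain q where q: "q permutes {..<2*n}" "colour_count n c q = k'"
    by blast
  moreover have "k' < 2*n"
    using step.hyps(2) k by simp
  ultimately show ?case
    using exists_colour_count_Suc[OF bal q(1) _ nb] by auto
qed

lemma exists_permutes_colour_count:
  assumes bal: "balanced_colouring n c" and nb: "\<not> block_colouring n c" and k: "k \<le> 2*n"
  shows "\<exists>q. q permutes {..<2*n} \<and> colour_count n c q = k"
proof (cases "colour_count n c id \<le> k")
  case True
  then show ?thesis
    using exists_permutes_colour_count_ge[OF bal nb _ k] by blast
next
  case False
  have nb': "\<not> block_colouring n (\<lambda>i j. \<not> c i j)"
    using nb by (simp add: block_colouring_Not_iff)
  have "colour_count n (\<lambda>i j. \<not> c i j) id \<le> 2*n - k"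
    using colour_count_Not[of n c id] False by linarith
  then obtain q where "q permutes {..<2*n}" "colour_count n (\<lambda>i j. \<not> c i j) q = 2*n - k"
    using exists_permutes_colour_count_ge[OF balanced_colouring_Not[OF bal] nb' _ diff_le_self]
    by blast
  then show ?thesis
    using colour_count_Not[of n c q] k by auto
qed

lemma ex_permutes_odd_colour_count_iff:
  assumes bal: "balanced_colouring n c" and k: "odd k" "k \<le> 2*n"
  shows "(\<exists>p. p permutes {..<2*n} \<and> colour_count n c p = k) \<longleftrightarrow> \<not> block_colouring n c"
proof
  assume "\<exists>p. p permutes {..<2*n} \<and> colour_count n c p = k"
  then obtain p where "p permutes {..<2*n}" and "colour_count n c p = k"
    by blast
  then show "\<not> block_colouring n c"
    using block_colouring_even_colour_count[OF bal] \<open>odd k\<close> by auto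
next
  assume "\<not> block_colouring n c"
  then show "\<exists>p. p permutes {..<2*n} \<and> colour_count n c p = k"
    by (rule exists_permutes_colour_count[OF bal _ \<open>k \<le> 2*n\<close>])
qed

theorem corollary1:
  fixes k n :: nat and blue :: "nat \<Rightarrow> nat \<Rightarrow> bool"
  assumes "odd k" and "k \<le> 2*n"
    and "balanced_colouring n blue"
  shows "(\<exists>M. perfect_matching n M \<and>
              card {(i, j) \<in> M. \<not> blue i j} = k \<and>
              card {(i, j) \<in> M. blue i j} = 2*n - k)
         \<longleftrightarrow> blue_graph_connected n blue"
proof -
  have "0 < n"
    using assms(1,2) by (cases n) auto
  have red: "balanced_colouring n (\<lambda>i j. \<not> blue i j)"
    using assms(3) by (rule balanced_colouring_Not)
  show ?thesis
    unfolding ex_perfect_matching_colour_count_iff ex_permutes_odd_colour_count_iff[OF red assms(1,2)]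
      block_colouring_Not_iff blue_graph_connected_iff_not_block[OF assms(3) \<open>0 < n\<close>] ..
qed

end
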